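(* Let $1\le r\le n$, let $(z^1,\dots,z^n)$ be any random vector in $[r]^n$, and let $p,q\in[0,1]$. Let $\mathcal G$ be the random graph on $[n]$ in which, conditionally on $(z^1,\dots,z^n)$, each edge $\{i,j\}$ ($i\ne j$) is present independently with probability $p\,\mathbb 1\{z^i=z^j\}+q\,\mathbb 1\{z^i\ne z^j\}$. Then $\mathcal B(\mathcal G)\le n\log r$.
   Context: A random graph $\mathcal G$ on $[n]$ is identified with the random vector of edge indicators $(e^{ij})_{1\le i<j\le n}\in\{0,1\}^{\binom n2}$. For a random vector $x=(x^1,\dots,x^m)$ on a finite product set, the dual total correlation is $\mathcal B(x)=\mathcal H(x)-\sum_{i=1}^m\mathcal H(x^i\mid x^{-i})$, with $\mathcal H$ Shannon entropy and $x^{-i}$ the vector with coordinate $i$ removed. *)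

theory Defs
  imports "HOL-Probability.Probability"
begin

definition shannon_entropy :: "'a pmf \<Rightarrow> real" where
  "shannon_entropy P = (\<Sum>x\<in>set_pmf P. - pmf P x * ln (pmf P x))"

definition cond_entropy :: "('a \<times> 'b) pmf \<Rightarrow> real" where
  "cond_entropy P =
     (\<Sum>xy\<in>set_pmf P. - pmf P xy * ln (pmf P xy / pmf (map_pmf snd P) (snd xy)))"

text \<open>Dual total correlation of a random vector x indexed by the finite set I;
  the vector x^{-i} with coordinate i removed is represented by x(i := False)
  (all vectors considered take the default value False outside I).\<close>
definition dual_total_correlation :: "'i set \<Rightarrow> ('i \<Rightarrow> bool) pmf \<Rightarrow> real" where
  "dual_total_correlation I P =
     shannon_entropy P - (\<Sum>i\<in>I. cond_entropy (map_pmf (\<lambda>x. (x i, x(i := False))) P))"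

definition graph_edges :: "nat \<Rightarrow> (nat \<times> nat) set" where
  "graph_edges n = {(i, j). 1 \<le> i \<and> i < j \<and> j \<le> n}"

definition label_random_graph ::
  "nat \<Rightarrow> real \<Rightarrow> real \<Rightarrow> (nat \<Rightarrow> nat) pmf \<Rightarrow> (nat \<times> nat \<Rightarrow> bool) pmf" where
  "label_random_graph n p q Z =
     bind_pmf Z (\<lambda>z. Pi_pmf (graph_edges n) False
        (\<lambda>(i, j). bernoulli_pmf (if z i = z j then p else q)))"

end

theory Submission
  imports Defs
begin

(* Conditionally on the labelling z the edges are independent, so G is a mixture, over the
   law of z, of product measures.  Hence H(G) <= H(G, z) = H(z) + sum_e H(x^e | z), while
   conditioning on z as well can only lower the entropy of an edge given all the others:
   H(x^e | x^-e) >= H(x^e | x^-e, z) = H(x^e | z).  So the dual total correlation of G is at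
   most H(z) <= ln |supp z| <= n ln r.  The conditioning step and H(z) <= ln |supp z| are both
   instances of Gibbs' inequality, i.e. of ln t <= t - 1 summed against a distribution. *)

lemma mult_ln_div_le_diff:
  fixes a b :: real
  assumes "0 \<le> a" "0 \<le> b" "0 < a \<Longrightarrow> 0 < b"
  shows "a * ln (b / a) \<le> b - a"
proof (cases "a = 0")
  case False
  then have "0 < a" "0 < b" using assms by auto
  then have "a * ln (b / a) \<le> a * (b / a - 1)"
    by (intro mult_left_mono ln_le_minus_one) auto
  also have "\<dots> = b - a" using \<open>0 < a\<close> by (simp add: field_simps)
  finally show ?thesis .
qed (use assms in simp)

lemma shannon_entropy_eq_sum:
  assumes "finite A" "set_pmf P \<subseteq> A"
  shows "shannon_entropy P = (\<Sum>x\<in>A. - pmf P x * ln (pmf P x))"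
  unfolding shannon_entropy_def
  by (rule sum.mono_neutral_left[OF assms]) (auto simp: set_pmf_eq)

lemma shannon_entropy_le_ln_card:
  assumes fin: "finite (set_pmf P)"
  shows "shannon_entropy P \<le> ln (card (set_pmf P))"
proof -
  define c where "c = real (card (set_pmf P))"
  have "c > 0" unfolding c_def using fin by (simp add: card_gt_0_iff set_pmf_not_empty)
  have total: "(\<Sum>x\<in>set_pmf P. pmf P x) = 1" by (rule sum_pmf_eq_1[OF fin]) simp
  have "pmf P x * ln ((1 / c) / pmf P x) = - pmf P x * ln (pmf P x) - pmf P x * ln c"
    if "x \<in> set_pmf P" for x
    using \<open>c > 0\<close> that by (simp add: ln_div ln_mult pmf_positive algebra_simps)
  then have "shannon_entropy P - ln c = (\<Sum>x\<in>set_pmf P. pmf P x * ln ((1 / c) / pmf P x))"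
    unfolding shannon_entropy_def
    by (simp add: total sum_subtractf sum_distrib_right[symmetric])
  also have "\<dots> \<le> (\<Sum>x\<in>set_pmf P. 1 / c - pmf P x)"
    using \<open>c > 0\<close> by (intro sum_mono mult_ln_div_le_diff) auto
  also have "\<dots> = 0" using \<open>c > 0\<close> total by (simp add: sum_subtractf c_def)
  finally show ?thesis unfolding c_def by simp
qed

lemma pmf_map_fun_upd_False:
  "pmf (map_pmf (\<lambda>x. x(e := False)) P) (y(e := False)) = pmf P (y(e := False)) + pmf P (y(e := True))"
proof -
  have "(\<lambda>x. x(e := False)) -` {y(e := False)} = {y(e := False), y(e := True)}"
  proof (intro set_eqI iffI)
    fix x assume "x \<in> (\<lambda>x. x(e := False)) -` {y(e := False)}"
    then have "x = y(e := x e)" by (metis fun_upd_triv fun_upd_upd vimage_singleton_eq)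
    then show "x \<in> {y(e := False), y(e := True)}" by (cases "x e") auto
  qed auto
  moreover have "y(e := False) \<noteq> y(e := True)" by (metis fun_upd_same)
  ultimately show ?thesis by (simp add: pmf_map measure_measure_pmf_finite)
qed

lemma cond_entropy_coordinate:
  fixes P :: "('a \<Rightarrow> bool) pmf"
  assumes "finite A" "set_pmf P \<subseteq> A"
  shows "cond_entropy (map_pmf (\<lambda>x. (x e, x(e := False))) P)
    = (\<Sum>x\<in>A. - pmf P x * ln (pmf P x / (pmf P (x(e := False)) + pmf P (x(e := True)))))"
proof -
  define f where "f x = (x e, x(e := False))" for x :: "'a \<Rightarrow> bool"
  have "inj f"
    by (rule injI) (metis f_def fun_upd_triv fun_upd_upd prod.inject)
  have pmf_f: "pmf (map_pmf f P) (f x) = pmf P x" for x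
    by (rule pmf_map_inj'[OF \<open>inj f\<close>])
  have pmf_snd: "pmf (map_pmf snd (map_pmf f P)) (snd (f x))
      = pmf P (x(e := False)) + pmf P (x(e := True))" for x
    by (simp add: map_pmf_comp f_def pmf_map_fun_upd_False)
  have "cond_entropy (map_pmf f P)
      = (\<Sum>x\<in>set_pmf P. - pmf P x * ln (pmf P x / (pmf P (x(e := False)) + pmf P (x(e := True)))))"
    unfolding cond_entropy_def set_map_pmf
    by (subst sum.reindex[OF inj_on_subset[OF \<open>inj f\<close>]]) (simp_all add: pmf_f pmf_snd)
  also have "\<dots> = (\<Sum>x\<in>A. - pmf P x * ln (pmf P x / (pmf P (x(e := False)) + pmf P (x(e := True)))))"
    by (rule sum.mono_neutral_left[OF assms]) (auto simp: set_pmf_eq)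
  finally show ?thesis unfolding f_def .
qed

locale product_mixture =
  fixes E :: "'e set" and Z :: "'z pmf" and \<kappa> :: "'z \<Rightarrow> 'e \<Rightarrow> bool pmf"
  assumes finite_E: "finite E" and finite_Z: "finite (set_pmf Z)"
begin

definition mixture :: "('e \<Rightarrow> bool) pmf" where
  "mixture = bind_pmf Z (\<lambda>z. Pi_pmf E False (\<kappa> z))"

definition vectors :: "('e \<Rightarrow> bool) set" where
  "vectors = {x. \<forall>e. e \<notin> E \<longrightarrow> \<not> x e}"

(* For x in vectors, joint z x = P(z, G = x), joint_others e z x = P(z, x^-e) and
   cond_entropy_given_label e = H(x^e | z). *)
definition joint :: "'z \<Rightarrow> ('e \<Rightarrow> bool) \<Rightarrow> real" where
  "joint z x = pmf Z z * (\<Prod>e\<in>E. pmf (\<kappa> z e) (x e))"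

definition joint_others :: "'e \<Rightarrow> 'z \<Rightarrow> ('e \<Rightarrow> bool) \<Rightarrow> real" where
  "joint_others e z x = pmf Z z * (\<Prod>e'\<in>E - {e}. pmf (\<kappa> z e') (x e'))"

definition cond_entropy_given_label :: "'e \<Rightarrow> real" where
  "cond_entropy_given_label e =
     (\<Sum>z\<in>set_pmf Z. \<Sum>x\<in>vectors. - joint z x * ln (pmf (\<kappa> z e) (x e)))"

lemma finite_vectors: "finite vectors"
proof -
  have "vectors = (\<lambda>A e. e \<in> A) ` Pow E"
    unfolding vectors_def by (auto intro!: image_eqI[where x="{e. _ e}"])
  then show ?thesis using finite_E by simp
qed

lemma fun_upd_in_vectors: "x \<in> vectors \<Longrightarrow> e \<in> E \<Longrightarrow> x(e := b) \<in> vectors"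
  unfolding vectors_def by auto

lemma joint_nonneg: "0 \<le> joint z x"
  unfolding joint_def by (simp add: prod_nonneg)

lemma joint_others_nonneg: "0 \<le> joint_others e z x"
  unfolding joint_others_def by (simp add: prod_nonneg)

lemma joint_eq_joint_others: "e \<in> E \<Longrightarrow> joint z x = pmf (\<kappa> z e) (x e) * joint_others e z x"
  unfolding joint_def joint_others_def by (simp add: prod.remove[OF finite_E])

lemma joint_others_fun_upd: "joint_others e z (x(e := b)) = joint_others e z x"
  unfolding joint_others_def by (intro arg_cong[where f="(*) _"] prod.cong) auto

lemma pmf_Pi_pmf_kernel:
  "pmf (Pi_pmf E False (\<kappa> z)) x = (if x \<in> vectors then \<Prod>e\<in>E. pmf (\<kappa> z e) (x e) else 0)"
  unfolding vectors_def by (subst pmf_Pi[OF finite_E]) auto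

lemma sum_joint: "(\<Sum>x\<in>vectors. joint z x) = pmf Z z"
proof -
  have "(\<Sum>x\<in>vectors. pmf (Pi_pmf E False (\<kappa> z)) x) = 1"
    by (rule sum_pmf_eq_1[OF finite_vectors])
      (auto simp: set_pmf_eq pmf_Pi_pmf_kernel split: if_splits)
  then show ?thesis
    unfolding joint_def by (simp add: pmf_Pi_pmf_kernel sum_distrib_left[symmetric])
qed

lemma pmf_mixture: "pmf mixture x = (if x \<in> vectors then \<Sum>z\<in>set_pmf Z. joint z x else 0)"
proof -
  have "pmf mixture x = (\<Sum>z\<in>set_pmf Z. pmf Z z *\<^sub>R pmf (Pi_pmf E False (\<kappa> z)) x)"
    unfolding mixture_def pmf_bind by (rule integral_measure_pmf[OF finite_Z]) auto
  then show ?thesis unfolding joint_def by (simp add: pmf_Pi_pmf_kernel)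
qed

lemma set_pmf_mixture: "set_pmf mixture \<subseteq> vectors"
  using pmf_mixture by (auto simp: set_pmf_eq)

lemma joint_le_pmf_mixture:
  assumes "x \<in> vectors" shows "joint z x \<le> pmf mixture x"
proof (cases "z \<in> set_pmf Z")
  case True
  then show ?thesis
    unfolding pmf_mixture using assms by (simp, intro member_le_sum joint_nonneg finite_Z)
qed (simp add: joint_def set_pmf_iff)

lemma pmf_mixture_fun_upd_sum:
  assumes "e \<in> E" "x \<in> vectors"
  shows "pmf mixture (x(e := False)) + pmf mixture (x(e := True)) = (\<Sum>z\<in>set_pmf Z. joint_others e z x)"
proof -
  have pmf_upd: "pmf mixture (x(e := b)) = (\<Sum>z\<in>set_pmf Z. pmf (\<kappa> z e) b * joint_others e z x)" for b
    using assms by (simp add: pmf_mixture fun_upd_in_vectors joint_eq_joint_others joint_others_fun_upd)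
  have "(\<Sum>b\<in>UNIV. pmf (\<kappa> z e) b) = 1" for z
    by (rule sum_pmf_eq_1) auto
  then have "pmf (\<kappa> z e) False + pmf (\<kappa> z e) True = 1" for z
    by (simp add: UNIV_bool)
  then show ?thesis
    unfolding pmf_upd sum.distrib[symmetric] by (simp add: distrib_right[symmetric])
qed

lemma joint_pos_factors:
  assumes "joint z x \<noteq> 0"
  shows "0 < pmf Z z" and "e \<in> E \<Longrightarrow> 0 < pmf (\<kappa> z e) (x e)"
  using assms finite_E by (auto simp: joint_def less_le)

lemma ln_joint:
  assumes "joint z x \<noteq> 0"
  shows "ln (joint z x) = ln (pmf Z z) + (\<Sum>e\<in>E. ln (pmf (\<kappa> z e) (x e)))"
proof -
  note pos = joint_pos_factors[OF assms]
  have "ln (\<Prod>e\<in>E. pmf (\<kappa> z e) (x e)) = (\<Sum>e\<in>E. ln (pmf (\<kappa> z e) (x e)))"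
    using pos(2) by (intro ln_prod[OF finite_E]) force
  moreover have "0 < (\<Prod>e\<in>E. pmf (\<kappa> z e) (x e))"
    using pos(2) by (simp add: prod_pos)
  ultimately show ?thesis
    using pos(1) unfolding joint_def by (simp add: ln_mult)
qed

lemma shannon_entropy_mixture_le:
  "shannon_entropy mixture \<le> shannon_entropy Z + (\<Sum>e\<in>E. cond_entropy_given_label e)"
proof -
  have pointwise: "- joint z x * ln (pmf mixture x)
      \<le> - joint z x * ln (pmf Z z) + (\<Sum>e\<in>E. - joint z x * ln (pmf (\<kappa> z e) (x e)))"
    if "x \<in> vectors" for z x
  proof (cases "joint z x = 0")
    case False
    then have "0 < joint z x" using joint_nonneg le_less by metis
    then have "ln (joint z x) \<le> ln (pmf mixture x)"
      by (intro ln_mono joint_le_pmf_mixture that)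
    then have "joint z x * ln (joint z x) \<le> joint z x * ln (pmf mixture x)"
      using \<open>0 < joint z x\<close> by (simp add: mult_left_mono)
    then show ?thesis
      unfolding ln_joint[OF False] by (simp add: sum_negf sum_distrib_left[symmetric] algebra_simps)
  qed simp
  have "shannon_entropy mixture = (\<Sum>x\<in>vectors. - pmf mixture x * ln (pmf mixture x))"
    by (rule shannon_entropy_eq_sum[OF finite_vectors set_pmf_mixture])
  also have "\<dots> = (\<Sum>z\<in>set_pmf Z. \<Sum>x\<in>vectors. - joint z x * ln (pmf mixture x))"
    by (subst sum.swap) (simp add: pmf_mixture sum_distrib_right sum_negf)
  also have "\<dots> \<le> (\<Sum>z\<in>set_pmf Z. \<Sum>x\<in>vectors. - joint z x * ln (pmf Z z)
      + (\<Sum>e\<in>E. - joint z x * ln (pmf (\<kappa> z e) (x e))))"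
    by (intro sum_mono pointwise)
  also have "\<dots> = shannon_entropy Z + (\<Sum>e\<in>E. cond_entropy_given_label e)"
    unfolding shannon_entropy_def cond_entropy_given_label_def sum.distrib
    by (simp add: sum_negf sum_distrib_right[symmetric] sum_joint sum.swap[where B = E])
  finally show ?thesis .
qed

lemma cond_entropy_given_label_le:
  assumes "e \<in> E"
  shows "cond_entropy_given_label e \<le> cond_entropy (map_pmf (\<lambda>x. (x e, x(e := False))) mixture)"
proof -
  define P where "P = pmf mixture"
  define M where "M x = P (x(e := False)) + P (x(e := True))" for x
  have P_le_M: "P x \<le> M x" for x
  proof (cases "x e")
    case True
    then have "x(e := True) = x" by (simp add: fun_upd_idem)
    then show ?thesis unfolding M_def P_def by (metis le_add_same_cancel2 pmf_nonneg)
  next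
    case False
    then have "x(e := False) = x" by (simp add: fun_upd_idem)
    then show ?thesis unfolding M_def P_def by (metis le_add_same_cancel1 pmf_nonneg)
  qed
  have pointwise: "joint z x * (ln (P x / M x) - ln (pmf (\<kappa> z e) (x e)))
      \<le> joint_others e z x * (P x / M x) - joint z x" if "x \<in> vectors" for z x
  proof (cases "joint z x = 0")
    case True
    then show ?thesis
      by (simp add: P_def M_def joint_others_nonneg)
  next
    case False
    then have "0 < joint z x" using joint_nonneg le_less by metis
    have "0 < pmf (\<kappa> z e) (x e)" by (rule joint_pos_factors(2)[OF False assms])
    with \<open>0 < joint z x\<close> have "0 < joint_others e z x"
      unfolding joint_eq_joint_others[OF assms] by (simp add: zero_less_mult_iff)
    have "0 < P x" "0 < M x"
      using \<open>0 < joint z x\<close> joint_le_pmf_mixture[OF that, of z] P_le_M[of x] by (simp_all add: P_def)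
    have "joint_others e z x * (P x / M x) / joint z x = (P x / M x) / pmf (\<kappa> z e) (x e)"
      using \<open>0 < joint_others e z x\<close> unfolding joint_eq_joint_others[OF assms] by simp
    then have "ln (P x / M x) - ln (pmf (\<kappa> z e) (x e))
        = ln (joint_others e z x * (P x / M x) / joint z x)"
      using \<open>0 < pmf (\<kappa> z e) (x e)\<close> \<open>0 < P x\<close> \<open>0 < M x\<close> by (simp add: ln_div ln_mult)
    then show ?thesis
      using \<open>0 < joint z x\<close> \<open>0 < joint_others e z x\<close> \<open>0 < P x\<close> \<open>0 < M x\<close>
      by (simp only:) (intro mult_ln_div_le_diff; simp)
  qed
  have "(\<Sum>z\<in>set_pmf Z. \<Sum>x\<in>vectors. joint_others e z x * (P x / M x))
      = (\<Sum>x\<in>vectors. (\<Sum>z\<in>set_pmf Z. joint_others e z x) * (P x / M x))"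
    by (subst sum.swap) (simp only: sum_distrib_right)
  also have "\<dots> = (\<Sum>x\<in>vectors. M x * (P x / M x))"
    by (intro sum.cong refl) (simp add: M_def P_def assms pmf_mixture_fun_upd_sum)
  also have "\<dots> = (\<Sum>x\<in>vectors. P x)"
  proof (intro sum.cong refl)
    fix x
    have "0 \<le> P x" by (simp add: P_def)
    then show "M x * (P x / M x) = P x" using P_le_M[of x] by (cases "M x = 0") simp_all
  qed
  also have "\<dots> = (\<Sum>z\<in>set_pmf Z. \<Sum>x\<in>vectors. joint z x)"
    by (subst sum.swap) (intro sum.cong refl, simp add: P_def pmf_mixture)
  finally have masses_eq: "(\<Sum>z\<in>set_pmf Z. \<Sum>x\<in>vectors. joint_others e z x * (P x / M x))
      = (\<Sum>z\<in>set_pmf Z. \<Sum>x\<in>vectors. joint z x)" .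
  have "(\<Sum>z\<in>set_pmf Z. \<Sum>x\<in>vectors. joint z x * (ln (P x / M x) - ln (pmf (\<kappa> z e) (x e))))
      \<le> (\<Sum>z\<in>set_pmf Z. \<Sum>x\<in>vectors. joint_others e z x * (P x / M x) - joint z x)"
    by (intro sum_mono pointwise)
  also have "\<dots> = 0"
    using masses_eq by (simp only: sum_subtractf)
  finally have "(\<Sum>z\<in>set_pmf Z. \<Sum>x\<in>vectors.
      joint z x * (ln (P x / M x) - ln (pmf (\<kappa> z e) (x e)))) \<le> 0" .
  moreover have "cond_entropy (map_pmf (\<lambda>x. (x e, x(e := False))) mixture)
      = (\<Sum>z\<in>set_pmf Z. \<Sum>x\<in>vectors. - joint z x * ln (P x / M x))"
    unfolding cond_entropy_coordinate[OF finite_vectors set_pmf_mixture]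
    by (subst sum.swap) (simp add: M_def P_def pmf_mixture sum_distrib_right sum_negf)
  ultimately show ?thesis
    unfolding cond_entropy_given_label_def by (simp add: sum_subtractf sum_negf right_diff_distrib)
qed

lemma dual_total_correlation_mixture_le:
  "dual_total_correlation E mixture \<le> ln (card (set_pmf Z))"
proof -
  have "(\<Sum>e\<in>E. cond_entropy_given_label e)
      \<le> (\<Sum>e\<in>E. cond_entropy (map_pmf (\<lambda>x. (x e, x(e := False))) mixture))"
    by (intro sum_mono cond_entropy_given_label_le)
  then show ?thesis
    using shannon_entropy_mixture_le shannon_entropy_le_ln_card[OF finite_Z]
    unfolding dual_total_correlation_def by linarith
qed

end

lemma finite_graph_edges: "finite (graph_edges n)"
proof -
  have "graph_edges n \<subseteq> {1..n} \<times> {1..n}" unfolding graph_edges_def by auto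
  then show ?thesis by (rule finite_subset) simp
qed

(* The argument works for any edge kernel. *)
theorem proposition4:
  fixes n r :: nat and p q :: real and Z :: "(nat \<Rightarrow> nat) pmf"
  assumes "1 \<le> r" and "r \<le> n"
    and "set_pmf Z \<subseteq> PiE {1..n} (\<lambda>_. {1..r})"
    and "0 \<le> p" and "p \<le> 1" and "0 \<le> q" and "q \<le> 1"
  shows "dual_total_correlation (graph_edges n) (label_random_graph n p q Z) \<le> real n * ln (real r)"
proof -
  have finite_labellings: "finite (PiE {1..n} (\<lambda>_. {1..r}))"
    by (simp add: finite_PiE)
  then have "finite (set_pmf Z)"
    using assms(3) by (rule finite_subset[rotated])
  then interpret product_mixture "graph_edges n" Z "\<lambda>z (i, j). bernoulli_pmf (if z i = z j then p else q)"
    by unfold_locales (rule finite_graph_edges)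
  have "card (set_pmf Z) \<le> r ^ n"
    using card_mono[OF finite_labellings assms(3)] by (simp add: card_PiE)
  then have "real (card (set_pmf Z)) \<le> real r ^ n"
    by (metis of_nat_le_iff of_nat_power)
  moreover have "0 < card (set_pmf Z)"
    using finite_Z by (simp add: card_gt_0_iff set_pmf_not_empty)
  ultimately have "ln (card (set_pmf Z)) \<le> ln (real r ^ n)"
    by (intro ln_mono) simp_all
  then show ?thesis
    using dual_total_correlation_mixture_le assms(1)
    unfolding label_random_graph_def mixture_def[symmetric] by (simp add: ln_realpow)
qed

end
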